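(* Let $r\ge1$, $\mathbf{m}\in\mathbb{N}^r$, $m=m_1+\cdots+m_r$, $\mathbf{f}\in\mathbb{C}^r$, $b\in\mathbb{C}$, and let $0\le k\le m$ be integers. Then $$ \sum_{i=0}^{k}\frac{(-k)_i(b)_i}{(-m)_{i}\,i!}\,{}_{r+1}F_{r}\!\left(\begin{matrix}-i,\mathbf{f}+\mathbf{m}\\\mathbf{f}\end{matrix}\right) =\frac{(-b-m)_k}{(-m)_k}\,{}_{r+2}F_{r+1}\!\left(\begin{matrix}-k,b,\mathbf{f}+\mathbf{m}\\ b+m-k+1,\mathbf{f}\end{matrix}\right). $$
   Context: $(a)_k=\Gamma(a+k)/\Gamma(a)$. $\mathbf{f}+\mathbf{m}$ is componentwise; a vector among hypergeometric parameters means its components are listed. ${}_pF_q(\mathbf{a};\mathbf{b})$ denotes the terminating generalized hypergeometric series evaluated at argument $1$. Parameters are assumed such that no denominator in these terminating series vanishes. *)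

theory Defs
  imports "HOL-Analysis.Analysis"
begin

text \<open>Terminating generalized hypergeometric series at argument 1, given the
numerator parameter list as, denominator parameter list bs, truncated at index n
(the series terminates at n because one numerator parameter is -n).\<close>
definition hyp_term :: "complex list \<Rightarrow> complex list \<Rightarrow> nat \<Rightarrow> complex" where
  "hyp_term as bs j =
     (\<Prod>a\<leftarrow>as. pochhammer a j) / ((\<Prod>b\<leftarrow>bs. pochhammer b j) * of_nat (fact j))"

definition hyp_F :: "nat \<Rightarrow> complex list \<Rightarrow> complex list \<Rightarrow> complex" where
  "hyp_F n as bs = (\<Sum>j\<le>n. hyp_term as bs j)"

end

theory Submission
  imports Defs
begin

text \<open>Expanding each inner series and exchanging the two finite sums reduces the identity to one
about the coefficient of a fixed term \<open>j\<close>: the sum over \<open>i\<close> of the outer weights times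
\<open>(-i)\<^sub>j\<close>. After the shift \<open>i = j + t\<close> that sum is a Chu-Vandermonde sum in \<open>t\<close>, whose value,
rewritten with the reflection \<open>(x)\<^sub>k = (-1)\<^sup>j (x)\<^sub>k\<^sub>-\<^sub>j (-x-k+1)\<^sub>j\<close>, is exactly the \<open>j\<close>-th term of the
right-hand side. The inner coefficients play no role.\<close>

lemma pochhammer_neg_of_nat_div_fact:
  "pochhammer (- of_nat (j + t)) j / fact (j + t) = (- 1) ^ j / (fact t :: 'a::field_char_0)"
proof -
  have fact_split: "fact (j + t) = fact t * pochhammer (of_nat t + 1 :: 'a) j"
    using pochhammer_product'[of 1 t j] by (simp add: pochhammer_fact add.commute)
  have "pochhammer (- of_nat (j + t) :: 'a) j = (- 1) ^ j * pochhammer (of_nat t + 1) j"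
    using pochhammer_minus[of "of_nat (j + t) :: 'a" j] by simp
  moreover have "pochhammer (of_nat t + 1 :: 'a) j \<noteq> 0"
    using fact_split by (metis fact_nonzero mult_zero_right)
  ultimately show ?thesis
    unfolding fact_split by simp
qed

lemma pochhammer_split_reflect:
  fixes x :: "'a::comm_ring_1"
  assumes "j \<le> k"
  shows "pochhammer x k = (- 1) ^ j * pochhammer x (k - j) * pochhammer (- x - of_nat k + 1) j"
proof -
  have "pochhammer x k = pochhammer x (k - j) * pochhammer (- (- x - of_nat (k - j))) j"
    using pochhammer_product'[of x "k - j" j] assms by (simp add: ac_simps)
  also have "pochhammer (- (- x - of_nat (k - j))) j
      = (- 1) ^ j * pochhammer (- x - of_nat (k - j) - of_nat j + 1) j"
    by (rule pochhammer_minus)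
  also have "- x - of_nat (k - j) - of_nat j = - x - of_nat k"
    using assms by (simp add: of_nat_diff)
  finally show ?thesis by simp
qed

lemma Vandermonde_falling_moment:
  fixes b :: "'a::field_char_0"
  assumes jk: "j \<le> k" and km: "k \<le> m"
  shows "(\<Sum>i\<le>k. pochhammer (- of_nat k) i * pochhammer b i
             / (pochhammer (- of_nat m) i * fact i) * pochhammer (- of_nat i) j)
       = (- 1) ^ j * pochhammer (- of_nat k) j * pochhammer b j
           * pochhammer (- b - of_nat m) (k - j) / pochhammer (- of_nat m) k"
proof -
  define g where "g i = pochhammer (- of_nat k) i * pochhammer b i
      / (pochhammer (- of_nat m) i * fact i) * pochhammer (- of_nat i :: 'a) j" for i
  define C where "C = (- 1) ^ j * pochhammer (- of_nat k) j * pochhammer b j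
      / pochhammer (- of_nat m :: 'a) j"
  define c where "c = - of_nat m + (of_nat j :: 'a)"
  have poch_m_nz: "pochhammer (- of_nat m :: 'a) n \<noteq> 0" if "n \<le> m" for n
    using that by (simp add: pochhammer_of_nat_eq_0_iff)
  have shifted_term: "g (j + t) = C * (pochhammer (b + of_nat j) t * pochhammer (- of_nat (k - j)) t
      / (fact t * pochhammer c t))" if "t \<le> k - j" for t
  proof -
    have "pochhammer c t \<noteq> 0"
      using poch_m_nz[of "j + t"] that jk km by (auto simp: c_def pochhammer_product')
    moreover have "- of_nat k + of_nat j = (- of_nat (k - j) :: 'a)"
      using jk by (simp add: of_nat_diff)
    moreover have "g (j + t) = pochhammer (- of_nat k) (j + t) * pochhammer b (j + t)
        / pochhammer (- of_nat m) (j + t) * ((- 1) ^ j / fact t)"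
      unfolding g_def pochhammer_neg_of_nat_div_fact[of j t, symmetric] by simp
    ultimately show ?thesis
      using poch_m_nz[of j] jk km
      unfolding C_def c_def by (simp add: pochhammer_product' field_simps)
  qed
  have c_not_pole: "\<forall>i\<in>{0..<k - j}. c \<noteq> - of_nat i"
  proof (intro ballI notI)
    fix i assume "i \<in> {0..<k - j}" and "c = - of_nat i"
    then have "of_nat (i + j) = (of_nat m :: 'a)" and "i + j < m"
      using jk km by (auto simp: c_def algebra_simps)
    then show False by (simp only: of_nat_eq_iff)
  qed
  have "(\<Sum>i\<le>k. g i) = (\<Sum>i\<in>{j..k}. g i)"
    by (rule sum.mono_neutral_right) (auto simp: g_def pochhammer_of_nat_eq_0_iff)
  also have "\<dots> = (\<Sum>t\<in>{0..k - j}. g (j + t))"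
    using sum.shift_bounds_cl_nat_ivl[of g 0 j "k - j"] jk by (simp add: add.commute)
  also have "\<dots> = C * (\<Sum>t\<in>{0..k - j}. pochhammer (b + of_nat j) t
      * pochhammer (- of_nat (k - j)) t / (fact t * pochhammer c t))"
    by (simp add: shifted_term sum_distrib_left)
  also have "\<dots> = C * (pochhammer (c - (b + of_nat j)) (k - j) / pochhammer c (k - j))"
    using Vandermonde_pochhammer[OF c_not_pole] by simp
  also have "\<dots> = (- 1) ^ j * pochhammer (- of_nat k) j * pochhammer b j
      * pochhammer (- b - of_nat m) (k - j) / pochhammer (- of_nat m) k"
    using pochhammer_product'[of "- of_nat m :: 'a" j "k - j"] jk
    by (simp add: C_def c_def algebra_simps)
  finally show ?thesis by (simp add: g_def)
qed

lemma sum_terminating_series_transform: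
  fixes b :: "'a::field_char_0" and Q :: "nat \<Rightarrow> 'a"
  assumes km: "k \<le> m"
    and c_nz: "\<And>j. j \<le> k \<Longrightarrow> pochhammer (b + of_nat m - of_nat k + 1) j \<noteq> 0"
  shows "(\<Sum>i\<le>k. pochhammer (- of_nat k) i * pochhammer b i
             / (pochhammer (- of_nat m) i * fact i)
           * (\<Sum>j\<le>i. pochhammer (- of_nat i) j * Q j / fact j))
       = pochhammer (- b - of_nat m) k / pochhammer (- of_nat m) k
           * (\<Sum>j\<le>k. pochhammer (- of_nat k) j * pochhammer b j * Q j
               / (pochhammer (b + of_nat m - of_nat k + 1) j * fact j))"
proof -
  define w where "w i = pochhammer (- of_nat k) i * pochhammer b i
      / (pochhammer (- of_nat m) i * fact i)" for i
  have inner_extend: "(\<Sum>j\<le>i. pochhammer (- of_nat i) j * Q j / fact j)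
      = (\<Sum>j\<le>k. pochhammer (- of_nat i :: 'a) j * Q j / fact j)" if "i \<le> k" for i
    by (rule sum.mono_neutral_left) (use that in \<open>auto simp: pochhammer_of_nat_eq_0_iff\<close>)
  have coefficient: "(\<Sum>i\<le>k. w i * pochhammer (- of_nat i) j) * (Q j / fact j)
      = pochhammer (- b - of_nat m) k / pochhammer (- of_nat m) k
        * (pochhammer (- of_nat k) j * pochhammer b j * Q j
           / (pochhammer (b + of_nat m - of_nat k + 1) j * fact j))" if "j \<le> k" for j
    using Vandermonde_falling_moment[OF that km, of b]
      pochhammer_split_reflect[OF that, of "- b - of_nat m"] c_nz[OF that]
    unfolding w_def by (simp add: field_simps power_mult_distrib[symmetric])
  have "(\<Sum>i\<le>k. w i * (\<Sum>j\<le>i. pochhammer (- of_nat i) j * Q j / fact j))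
      = (\<Sum>i\<le>k. \<Sum>j\<le>k. w i * pochhammer (- of_nat i) j * (Q j / fact j))"
    by (simp add: inner_extend sum_distrib_left mult.assoc)
  also have "\<dots> = (\<Sum>j\<le>k. (\<Sum>i\<le>k. w i * pochhammer (- of_nat i) j) * (Q j / fact j))"
    by (subst sum.swap) (simp add: sum_distrib_right sum_divide_distrib mult.assoc)
  also have "\<dots> = pochhammer (- b - of_nat m) k / pochhammer (- of_nat m) k
      * (\<Sum>j\<le>k. pochhammer (- of_nat k) j * pochhammer b j * Q j
          / (pochhammer (b + of_nat m - of_nat k + 1) j * fact j))"
    unfolding sum_distrib_left by (intro sum.cong refl coefficient) simp
  finally show ?thesis by (simp only: w_def)
qed

theorem lemma4:
  fixes r :: nat and mv :: "nat \<Rightarrow> nat" and fv :: "nat \<Rightarrow> complex"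
    and b :: complex and m k :: nat
  assumes "r \<ge> 1"
    and "m = (\<Sum>l<r. mv l)"
    and "k \<le> m"
    and "\<And>l j. l < r \<Longrightarrow> j \<le> k \<Longrightarrow> pochhammer (fv l) j \<noteq> 0"
    and "\<And>j. j \<le> k \<Longrightarrow> pochhammer (b + of_nat m - of_nat k + 1) j \<noteq> 0"
  shows "(\<Sum>i\<le>k. pochhammer (- of_nat k) i * pochhammer b i
             / (pochhammer (- of_nat m) i * of_nat (fact i))
           * hyp_F i (- of_nat i # map (\<lambda>l. fv l + of_nat (mv l)) [0..<r])
                     (map fv [0..<r]))
       = pochhammer (- b - of_nat m) k / pochhammer (- of_nat m) k
           * hyp_F k (- of_nat k # b # map (\<lambda>l. fv l + of_nat (mv l)) [0..<r])
                     ((b + of_nat m - of_nat k + 1) # map fv [0..<r])"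
proof -
  define A where "A = map (\<lambda>l. fv l + of_nat (mv l)) [0..<r]"
  define B where "B = map fv [0..<r]"
  define Q where "Q j = (\<Prod>a\<leftarrow>A. pochhammer a j) / (\<Prod>a\<leftarrow>B. pochhammer a j)" for j
  have "hyp_F i (- of_nat i # A) B = (\<Sum>j\<le>i. pochhammer (- of_nat i) j * Q j / fact j)" for i
    by (simp add: hyp_F_def hyp_term_def Q_def)
  moreover have "hyp_F k (- of_nat k # b # A) ((b + of_nat m - of_nat k + 1) # B)
      = (\<Sum>j\<le>k. pochhammer (- of_nat k) j * pochhammer b j * Q j
          / (pochhammer (b + of_nat m - of_nat k + 1) j * fact j))"
    by (simp add: hyp_F_def hyp_term_def Q_def mult_ac)
  ultimately show ?thesis
    using sum_terminating_series_transform[OF assms(3,5), of Q]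
    by (simp add: A_def B_def)
qed

end
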